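(* Let $\Omega = \{-1\} \cup [0,\infty)$, let $E$ be the Banach space of all bounded continuous real functions on $\Omega$ with the supremum norm, and let $$C = \{ x \in E : 0 \le x(u) \le 1 \text{ for all } u \in \Omega,\ |x(u_1)-x(u_2)| \le |u_1-u_2| \text{ for all } u_1,u_2 \in [0,\infty)\}.$$ For $x \in C$ and $v \ge 0$ put $\alpha_x(v) = \sup\{ x(s) : s \in \{-1\}\cup[v,\infty)\}$. For $t \in [0,1]$ and $x \in C$ define $T(t)x$ on $\Omega$ by $$(T(t)x)(u) = \begin{cases} x(-1), & u=-1,\\ x(u-t), & u \ge t,\\ x(0)-t+u, & 0\le u\le t \text{ and } 1-\alpha_x(1-t+u) \le x(0)-t+u,\\ x(0)+t-u, & 0\le u\le t \text{ and } 1-\alpha_x(1-t+u) \ge x(0)+t-u,\\ 1-\alpha_x(1-t+u), & 0 \le u \le t \text{ and } |1-\alpha_x(1-t+u)-x(0)| \le t-u. \end{cases}$$ Fix $x \in C$, $t \in [0,1]$, and $u_1,u_2$ with $0 \le u_1 \le u_2 \le t$. Then: (i) if $1-\alpha_x(1-t+u_1) < (T(t)x)(u_2) - u_2 + u_1$, then $(T(t)x)(u_1) = x(0)-t+u_1$ and $(T(t)x)(u_2) = x(0)-t+u_2$; (ii) if $1-\alpha_x(1-t+u_1) > (T(t)x)(u_2) + u_2 - u_1$, then $(T(t)x)(u_1) = x(0)+t-u_1$ and $(T(t)x)(u_2) = x(0)+t-u_2$; (iii) if $|1-\alpha_x(1-t+u_1) - (T(t)x)(u_2)| \le u_2 - u_1$,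 then $(T(t)x)(u_1) = 1-\alpha_x(1-t+u_1)$. *)

theory Defs
  imports "HOL-Analysis.Analysis"
begin

definition Omega :: "real set" where
  "Omega = {-1} \<union> {0..}"

text \<open>E: bounded continuous real functions on Omega; elements are represented as
  functions real to real whose values off Omega are irrelevant.\<close>
definition inE :: "(real \<Rightarrow> real) \<Rightarrow> bool" where
  "inE x \<longleftrightarrow> continuous_on Omega x \<and> bounded (x ` Omega)"

definition inC :: "(real \<Rightarrow> real) \<Rightarrow> bool" where
  "inC x \<longleftrightarrow> inE x \<and> (\<forall>u\<in>Omega. 0 \<le> x u \<and> x u \<le> 1) \<and>
     (\<forall>u1\<ge>0. \<forall>u2\<ge>0. \<bar>x u1 - x u2\<bar> \<le> \<bar>u1 - u2\<bar>)"

definition alpha :: "(real \<Rightarrow> real) \<Rightarrow> real \<Rightarrow> real" where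
  "alpha x v = Sup (x ` ({-1} \<union> {v..}))"

definition T :: "real \<Rightarrow> (real \<Rightarrow> real) \<Rightarrow> real \<Rightarrow> real" where
  "T t x u =
    (if u = -1 then x (-1)
     else if u \<ge> t \<and> u \<ge> 0 then x (u - t)
     else if 0 \<le> u \<and> u \<le> t \<and> 1 - alpha x (1 - t + u) \<le> x 0 - t + u then x 0 - t + u
     else if 0 \<le> u \<and> u \<le> t \<and> 1 - alpha x (1 - t + u) \<ge> x 0 + t - u then x 0 + t - u
     else if 0 \<le> u \<and> u \<le> t \<and> \<bar>1 - alpha x (1 - t + u) - x 0\<bar> \<le> t - u
       then 1 - alpha x (1 - t + u)
     else 0)"

end

theory Submission
  imports Defs
begin

text \<open>For \<open>0 \<le> u \<le> t\<close> the value \<open>T t x u\<close> is the projection of \<open>1 - alpha x (1 - t + u)\<close>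
  onto the interval \<open>[x 0 - (t - u), x 0 + (t - u)]\<close>. Since \<open>alpha x\<close> is antitone and
  1-Lipschitz on \<open>[0, \<infinity>)\<close>, passing from \<open>u\<^sub>1\<close> to \<open>u\<^sub>2\<close> moves the point being projected up by at
  most \<open>u\<^sub>2 - u\<^sub>1\<close>, while the interval shrinks by exactly \<open>u\<^sub>2 - u\<^sub>1\<close> at each end. The three
  cases are then elementary comparisons of projections onto nested intervals.\<close>

lemma alpha_upper:
  assumes "bdd_above (x ` Omega)" and "0 \<le> v" and "s \<in> {-1} \<union> {v..}"
  shows "x s \<le> alpha x v"
proof -
  have "x ` ({-1} \<union> {v..}) \<subseteq> x ` Omega"
    using \<open>0 \<le> v\<close> unfolding Omega_def by auto
  then have "bdd_above (x ` ({-1} \<union> {v..}))"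
    by (rule bdd_above_mono[OF assms(1)])
  then show ?thesis
    unfolding alpha_def using assms(3) by (intro cSup_upper) auto
qed

lemma alpha_antimono:
  assumes "bdd_above (x ` Omega)" and "0 \<le> v" and "v \<le> w"
  shows "alpha x w \<le> alpha x v"
  unfolding alpha_def[of x w]
  using assms by (intro cSup_least) (auto intro: alpha_upper)

lemma alpha_le_add_diff:
  assumes "bdd_above (x ` Omega)"
    and lip: "\<forall>u1\<ge>0. \<forall>u2\<ge>0. \<bar>x u1 - x u2\<bar> \<le> \<bar>u1 - u2\<bar>"
    and "0 \<le> v" and "v \<le> w"
  shows "alpha x v \<le> alpha x w + (w - v)"
  unfolding alpha_def[of x v]
proof (rule cSup_least)
  fix y assume "y \<in> x ` ({-1} \<union> {v..})"
  then obtain s where s: "s \<in> {-1} \<union> {v..}" and y: "y = x s" by auto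
  show "y \<le> alpha x w + (w - v)"
  proof (cases "s = -1 \<or> w \<le> s")
    case True
    then show ?thesis using y assms alpha_upper[of x w s] by auto
  next
    case False
    then have "v \<le> s" "s < w" using s by auto
    then have "\<bar>x s - x w\<bar> \<le> w - s" using lip[rule_format, of s w] \<open>0 \<le> v\<close> by simp
    then have "x s \<le> x w + (w - v)" using \<open>v \<le> s\<close> by linarith
    moreover have "x w \<le> alpha x w" using assms by (intro alpha_upper) auto
    ultimately show ?thesis using y by linarith
  qed
qed auto

lemma T_eq_projection:
  assumes "0 \<le> u" and "u \<le> t"
  shows "T t x u = max (x 0 - (t - u)) (min (x 0 + (t - u)) (1 - alpha x (1 - t + u)))"
  using assms unfolding T_def by (auto simp: max_def min_def abs_le_iff)

lemma projection_shrinking_intervals: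
  fixes a1 a2 c r1 r2 :: real
  assumes "0 \<le> r2" and "r2 \<le> r1" and "a1 \<le> a2" and "a2 - a1 \<le> r1 - r2"
  defines "y1 \<equiv> max (c - r1) (min (c + r1) a1)" and "y2 \<equiv> max (c - r2) (min (c + r2) a2)"
  shows "(a1 < y2 - (r1 - r2) \<longrightarrow> y1 = c - r1 \<and> y2 = c - r2)
       \<and> (a1 > y2 + (r1 - r2) \<longrightarrow> y1 = c + r1 \<and> y2 = c + r2)
       \<and> (\<bar>a1 - y2\<bar> \<le> r1 - r2 \<longrightarrow> y1 = a1)"
  using assms unfolding y1_def y2_def by (auto simp: max_def min_def abs_le_iff)

theorem lemma2p3:
  fixes x :: "real \<Rightarrow> real" and t u1 u2 :: real
  assumes "inC x" and "0 \<le> t" and "t \<le> 1"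
    and "0 \<le> u1" and "u1 \<le> u2" and "u2 \<le> t"
  shows "(1 - alpha x (1 - t + u1) < T t x u2 - u2 + u1 \<longrightarrow>
            T t x u1 = x 0 - t + u1 \<and> T t x u2 = x 0 - t + u2)
       \<and> (1 - alpha x (1 - t + u1) > T t x u2 + u2 - u1 \<longrightarrow>
            T t x u1 = x 0 + t - u1 \<and> T t x u2 = x 0 + t - u2)
       \<and> (\<bar>1 - alpha x (1 - t + u1) - T t x u2\<bar> \<le> u2 - u1 \<longrightarrow>
            T t x u1 = 1 - alpha x (1 - t + u1))"
proof -
  have bdd: "bdd_above (x ` Omega)"
    using \<open>inC x\<close> unfolding inC_def bdd_above_def by blast
  have lip: "\<forall>u1\<ge>0. \<forall>u2\<ge>0. \<bar>x u1 - x u2\<bar> \<le> \<bar>u1 - u2\<bar>"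
    using \<open>inC x\<close> unfolding inC_def by blast
  have "alpha x (1 - t + u2) \<le> alpha x (1 - t + u1)"
    using assms by (intro alpha_antimono[OF bdd]) auto
  moreover have "alpha x (1 - t + u1) \<le> alpha x (1 - t + u2) + (u2 - u1)"
    using alpha_le_add_diff[OF bdd lip, of "1 - t + u1" "1 - t + u2"] assms by simp
  ultimately show ?thesis
    using projection_shrinking_intervals[of "t - u2" "t - u1"
        "1 - alpha x (1 - t + u1)" "1 - alpha x (1 - t + u2)" "x 0"] assms
    by (simp add: T_eq_projection algebra_simps)
qed

end
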